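(* Let $X$ and $Y$ be disjoint (finite or infinite) sets of cardinality at least two, let $M\le\mathrm{Sym}(X)$ and $N\le\mathrm{Sym}(Y)$ be permutation groups, let $T$ be the $(|X|,|Y|)$-biregular tree, and let $c$ be a legal colouring of $X$ and $Y$. Then $U_c(M,N)$ satisfies Tits' independence property (P).
   Context: $T$ has natural bipartition $VT=V_X\sqcup V_Y$ (vertices in $V_X$ have valency $|X|$, in $V_Y$ valency $|Y|$). $A(v)$, $\overline{A}(v)$ are the sets of arcs (ordered pairs of adjacent vertices) with origin, resp. terminus, $v$. A legal colouring is a map $c:AT\to X\cup Y$ restricting to a bijection $A(v)\to X$ for $v\in V_X$, to a bijection $A(v)\to Y$ for $v\in V_Y$, and constant on each $\overline{A}(v)$. $U_c(M,N)$ is the group of $g\in\mathrm{Aut}(T)$ with $gV_X=V_X$ and $c|_{A(gv)}\circ g|_{A(v)}\circ(c|_{A(v)})^{-1}$ in $M$ for $v\in V_X$ and in $N$ for $v\in V_Y$. Property (P): let $G$ act on a tree $T$. For a non-empty (finite or infinite) path $\mathcal{P}$ in $T$, let $\pi_{\mathcal{P}}(v)$ be the unique vertex of $\mathcal{P}$ closest to $v$; for $q\in V\mathcal{P}$, $\pi_{\mathcal{P}}^{-1}(q)$ spans a subtree invariant under the pointwise stabiliser $G_{(\mathcal{P})}$, and $G^q_{(\mathcal{P})}$ denotes the permutation group induced by $G_{(\mathcal{P})}$ on $\pi^{-1}_{\mathcal{P}}(q)$. $G$ has property (P) if, for every such path $\mathcal{P}$, the natural homomorphism $G_{(\mathcal{P})}\to\prod_{q\in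 V\mathcal{P}} G^q_{(\mathcal{P})}$ is an isomorphism. *)

theory Defs
  imports "HOL-Algebra.Bij" "HOL-Library.Equipollence"
begin

text \<open>Graphs: the vertex set is the whole type 'v, adjacency is a relation E.\<close>

definition edge_rel :: "('v \<Rightarrow> 'v \<Rightarrow> bool) \<Rightarrow> ('v \<times> 'v) set" where
  "edge_rel E = {(u, w). E u w}"

definition is_tree :: "('v \<Rightarrow> 'v \<Rightarrow> bool) \<Rightarrow> bool" where
  "is_tree E \<longleftrightarrow>
     (\<forall>u w. E u w \<longrightarrow> E w u) \<and> (\<forall>u. \<not> E u u) \<and>
     (\<forall>u w. (u, w) \<in> (edge_rel E)\<^sup>*) \<and>
     \<not> (\<exists>n (p :: nat \<Rightarrow> 'v). 3 \<le> n \<and> inj_on p {..<n} \<and>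
          (\<forall>i<n. E (p i) (p (Suc i mod n))))"

definition nbrs :: "('v \<Rightarrow> 'v \<Rightarrow> bool) \<Rightarrow> 'v \<Rightarrow> 'v set" where
  "nbrs E v = {w. E v w}"

definition arcs_from :: "('v \<Rightarrow> 'v \<Rightarrow> bool) \<Rightarrow> 'v \<Rightarrow> ('v \<times> 'v) set" where
  "arcs_from E v = {(v, w) | w. E v w}"

definition arcs_to :: "('v \<Rightarrow> 'v \<Rightarrow> bool) \<Rightarrow> 'v \<Rightarrow> ('v \<times> 'v) set" where
  "arcs_to E v = {(w, v) | w. E w v}"

definition biregular_bipartition ::
  "('v \<Rightarrow> 'v \<Rightarrow> bool) \<Rightarrow> 'v set \<Rightarrow> 'v set \<Rightarrow> 'c set \<Rightarrow> 'c set \<Rightarrow> bool" where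
  "biregular_bipartition E VX VY X Y \<longleftrightarrow>
     VX \<inter> VY = {} \<and> VX \<union> VY = UNIV \<and>
     (\<forall>u w. E u w \<longrightarrow> (u \<in> VX \<longleftrightarrow> w \<in> VY)) \<and>
     (\<forall>v\<in>VX. nbrs E v \<approx> X) \<and> (\<forall>v\<in>VY. nbrs E v \<approx> Y)"

definition legal_colouring ::
  "('v \<Rightarrow> 'v \<Rightarrow> bool) \<Rightarrow> 'v set \<Rightarrow> 'v set \<Rightarrow> 'c set \<Rightarrow> 'c set \<Rightarrow> ('v \<times> 'v \<Rightarrow> 'c) \<Rightarrow> bool" where
  "legal_colouring E VX VY X Y c \<longleftrightarrow>
     (\<forall>v\<in>VX. bij_betw c (arcs_from E v) X) \<and>
     (\<forall>v\<in>VY. bij_betw c (arcs_from E v) Y) \<and>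
     (\<forall>v. \<forall>a\<in>arcs_to E v. \<forall>b\<in>arcs_to E v. c a = c b)"

definition Aut :: "('v \<Rightarrow> 'v \<Rightarrow> bool) \<Rightarrow> ('v \<Rightarrow> 'v) set" where
  "Aut E = {g. bij g \<and> (\<forall>u w. E u w \<longleftrightarrow> E (g u) (g w))}"

text \<open>The local action c|A(gv) o g|A(v) o (c|A(v))^-1, as an extensional
  permutation of the colour set S (S = X for v in VX, S = Y for v in VY).\<close>

definition local_action ::
  "('v \<Rightarrow> 'v \<Rightarrow> bool) \<Rightarrow> ('v \<times> 'v \<Rightarrow> 'c) \<Rightarrow> ('v \<Rightarrow> 'v) \<Rightarrow> 'v \<Rightarrow> 'c set \<Rightarrow> ('c \<Rightarrow> 'c)" where
  "local_action E c g v S =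
     (\<lambda>x\<in>S. let a = inv_into (arcs_from E v) c x in c (g (fst a), g (snd a)))"

definition U ::
  "('v \<Rightarrow> 'v \<Rightarrow> bool) \<Rightarrow> 'v set \<Rightarrow> 'v set \<Rightarrow> 'c set \<Rightarrow> 'c set \<Rightarrow> ('v \<times> 'v \<Rightarrow> 'c)
     \<Rightarrow> ('c \<Rightarrow> 'c) set \<Rightarrow> ('c \<Rightarrow> 'c) set \<Rightarrow> ('v \<Rightarrow> 'v) set" where
  "U E VX VY X Y c M N =
     {g \<in> Aut E. g ` VX = VX \<and>
        (\<forall>v\<in>VX. local_action E c g v X \<in> M) \<and>
        (\<forall>v\<in>VY. local_action E c g v Y \<in> N)}"

definition is_path_vertices :: "('v \<Rightarrow> 'v \<Rightarrow> bool) \<Rightarrow> 'v set \<Rightarrow> bool" where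
  "is_path_vertices E P \<longleftrightarrow>
     (\<exists>(I :: int set) (p :: int \<Rightarrow> 'v). I \<noteq> {} \<and>
        (\<forall>i j k. i \<in> I \<longrightarrow> k \<in> I \<longrightarrow> i \<le> j \<longrightarrow> j \<le> k \<longrightarrow> j \<in> I) \<and>
        inj_on p I \<and> (\<forall>i. i \<in> I \<longrightarrow> i + 1 \<in> I \<longrightarrow> E (p i) (p (i + 1))) \<and>
        P = p ` I)"

definition tdist :: "('v \<Rightarrow> 'v \<Rightarrow> bool) \<Rightarrow> 'v \<Rightarrow> 'v \<Rightarrow> nat" where
  "tdist E u w = (LEAST n. (u, w) \<in> (edge_rel E) ^^ n)"

definition proj :: "('v \<Rightarrow> 'v \<Rightarrow> bool) \<Rightarrow> 'v set \<Rightarrow> 'v \<Rightarrow> 'v" where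
  "proj E P v = (THE q. q \<in> P \<and> (\<forall>q'\<in>P. q' \<noteq> q \<longrightarrow> tdist E v q < tdist E v q'))"

definition fibre :: "('v \<Rightarrow> 'v \<Rightarrow> bool) \<Rightarrow> 'v set \<Rightarrow> 'v \<Rightarrow> 'v set" where
  "fibre E P q = {v. proj E P v = q}"

definition pw_stab :: "('v \<Rightarrow> 'v) set \<Rightarrow> 'v set \<Rightarrow> ('v \<Rightarrow> 'v) set" where
  "pw_stab G P = {g \<in> G. \<forall>q\<in>P. g q = q}"

definition induced_on_fibre ::
  "('v \<Rightarrow> 'v \<Rightarrow> bool) \<Rightarrow> ('v \<Rightarrow> 'v) set \<Rightarrow> 'v set \<Rightarrow> 'v \<Rightarrow> ('v \<Rightarrow> 'v) set" where
  "induced_on_fibre E G P q = (\<lambda>g. restrict g (fibre E P q)) ` pw_stab G P"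

definition natural_map ::
  "('v \<Rightarrow> 'v \<Rightarrow> bool) \<Rightarrow> 'v set \<Rightarrow> ('v \<Rightarrow> 'v) \<Rightarrow> ('v \<Rightarrow> ('v \<Rightarrow> 'v))" where
  "natural_map E P g = (\<lambda>q\<in>P. restrict g (fibre E P q))"

text \<open>Tits' property (P). The natural map is a homomorphism by construction
  (restriction to invariant subtrees), so being an isomorphism means being bijective.\<close>

definition property_P :: "('v \<Rightarrow> 'v \<Rightarrow> bool) \<Rightarrow> ('v \<Rightarrow> 'v) set \<Rightarrow> bool" where
  "property_P E G \<longleftrightarrow>
     (\<forall>P. is_path_vertices E P \<longrightarrow>
        bij_betw (natural_map E P) (pw_stab G P) (PiE P (induced_on_fibre E G P)))"

end

theory Submission
  imports Defs
begin

text \<open>Every vertex v has a unique nearest vertex \<open>\<pi> v\<close> on the path P, and an edge joins two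
  different fibres \<open>\<pi>\<^sup>-\<^sup>1(q)\<close> only if it lies on P: by acyclicity, a path avoiding an endpoint u
  of an edge uw stays on one side of that edge. So, given for each \<open>q \<in> P\<close> an element \<open>H q\<close> of
  the pointwise stabiliser of P, the map acting on each fibre \<open>\<pi>\<^sup>-\<^sup>1(q)\<close> as \<open>H q\<close> is again an
  automorphism, and at every vertex v it agrees with \<open>H (\<pi> v)\<close> on the star of v, hence has the
  same local action there. Thus \<open>U\<^sub>c(M,N)\<close> is closed under this gluing, which is the surjectivity
  of the natural map; injectivity holds because the fibres cover the tree.\<close>

lemma successively_nth:
  "successively P xs \<Longrightarrow> Suc i < length xs \<Longrightarrow> P (xs ! i) (xs ! Suc i)"
proof (induction xs arbitrary: i)
  case (Cons a xs)
  then show ?case by (cases i; cases xs) (auto simp: successively_Cons)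
qed simp

lemma convex_int_set_const:
  fixes I :: "int set"
  assumes convex: "\<And>i j k. i \<in> I \<Longrightarrow> k \<in> I \<Longrightarrow> i \<le> j \<Longrightarrow> j \<le> k \<Longrightarrow> j \<in> I"
    and step: "\<And>k. k \<in> I \<Longrightarrow> k + 1 \<in> I \<Longrightarrow> f k = f (k + 1)"
    and "i \<in> I" "j \<in> I"
  shows "f i = f j"
proof -
  have up: "f a = f b" if a: "a \<in> I" and b: "b \<in> I" and ab: "a \<le> b" for a b
  proof -
    have ind: "b' \<le> b \<longrightarrow> f a = f b'" if "a \<le> b'" for b'
      using that
    proof (induction b' rule: int_ge_induct)
      case (step b')
      show ?case
      proof
        assume "b' + 1 \<le> b"
        then have "b' \<in> I" "b' + 1 \<in> I" using convex[OF a b] step.hyps by auto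
        then show "f a = f (b' + 1)" using step.IH \<open>b' + 1 \<le> b\<close> assms(2) by simp
      qed
    qed simp
    show ?thesis using ind[OF ab] by simp
  qed
  show ?thesis
  proof (cases "i \<le> j")
    case True
    then show ?thesis by (rule up[OF assms(3,4)])
  next
    case False
    then show ?thesis using up[OF assms(4,3)] by simp
  qed
qed

lemma bij_image_eq_iff:
  assumes "bij g"
  shows "g ` A = A \<longleftrightarrow> (\<forall>v. g v \<in> A \<longleftrightarrow> v \<in> A)"
proof
  assume gA: "g ` A = A"
  have "inj g" using assms by (rule bij_is_inj)
  then show "\<forall>v. g v \<in> A \<longleftrightarrow> v \<in> A" by (metis gA inj_image_mem_iff)
next
  assume "\<forall>v. g v \<in> A \<longleftrightarrow> v \<in> A"
  moreover have "surj g" using assms by (rule bij_is_surj)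
  ultimately show "g ` A = A" by (metis image_subset_iff subsetI subset_antisym surj_def)
qed

lemma local_action_cong:
  assumes "bij_betw c (arcs_from E v) S" and "g v = h v" and "\<And>w. E v w \<Longrightarrow> g w = h w"
  shows "local_action E c g v S = local_action E c h v S"
  unfolding local_action_def Let_def
proof (rule restrict_ext)
  fix x assume "x \<in> S"
  then have "inv_into (arcs_from E v) c x \<in> arcs_from E v"
    using assms(1) by (auto simp: bij_betw_def intro: inv_into_into)
  then obtain w where "inv_into (arcs_from E v) c x = (v, w)" "E v w"
    unfolding arcs_from_def by auto
  then show "c (g (fst (inv_into (arcs_from E v) c x)), g (snd (inv_into (arcs_from E v) c x))) =
        c (h (fst (inv_into (arcs_from E v) c x)), h (snd (inv_into (arcs_from E v) c x)))"
    using assms(2,3) by simp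
qed

section \<open>Property (P) from closure under gluing\<close>

definition glue :: "('v \<Rightarrow> 'v \<Rightarrow> bool) \<Rightarrow> 'v set \<Rightarrow> ('v \<Rightarrow> 'v \<Rightarrow> 'v) \<Rightarrow> 'v \<Rightarrow> 'v" where
  "glue E P H v = H (proj E P v) v"

lemma natural_map_bij_betw_if_glue_closed:
  assumes proj_in: "\<And>v. proj E P v \<in> P" and proj_self: "\<And>q. q \<in> P \<Longrightarrow> proj E P q = q"
    and glue_closed: "\<And>H. (\<And>q. q \<in> P \<Longrightarrow> H q \<in> pw_stab G P) \<Longrightarrow> glue E P H \<in> G"
  shows "bij_betw (natural_map E P) (pw_stab G P) (PiE P (induced_on_fibre E G P))"
proof -
  have in_fibre: "v \<in> fibre E P (proj E P v)" for v
    unfolding fibre_def by simp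
  have "inj_on (natural_map E P) (pw_stab G P)"
  proof (rule inj_onI, rule ext)
    fix g1 g2 v assume "natural_map E P g1 = natural_map E P g2"
    then have "natural_map E P g1 (proj E P v) v = natural_map E P g2 (proj E P v) v" by simp
    then show "g1 v = g2 v" using proj_in in_fibre unfolding natural_map_def by simp
  qed
  moreover have "natural_map E P ` pw_stab G P \<subseteq> PiE P (induced_on_fibre E G P)"
    unfolding natural_map_def induced_on_fibre_def by auto
  moreover have "f \<in> natural_map E P ` pw_stab G P" if f: "f \<in> PiE P (induced_on_fibre E G P)" for f
  proof -
    have "\<exists>h. h \<in> pw_stab G P \<and> f q = restrict h (fibre E P q)" if "q \<in> P" for q
      using f that unfolding induced_on_fibre_def by auto
    then obtain H where H: "\<And>q. q \<in> P \<Longrightarrow> H q \<in> pw_stab G P \<and> f q = restrict (H q) (fibre E P q)"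
      by metis
    have "glue E P H \<in> pw_stab G P"
      using glue_closed H proj_self unfolding pw_stab_def glue_def by auto
    moreover have "natural_map E P (glue E P H) = f"
    proof
      fix q
      show "natural_map E P (glue E P H) q = f q"
        using H[of q] PiE_arb[OF f, of q] unfolding natural_map_def glue_def fibre_def
        by (cases "q \<in> P") (auto intro: restrict_ext)
    qed
    ultimately show ?thesis by blast
  qed
  ultimately show ?thesis unfolding bij_betw_def by blast
qed

section \<open>Distances in a bipartite tree\<close>

locale bipartite_tree =
  fixes E :: "'v \<Rightarrow> 'v \<Rightarrow> bool" and VX VY :: "'v set"
  assumes tree: "is_tree E"
    and parts_disjoint: "VX \<inter> VY = {}" and parts_cover: "VX \<union> VY = UNIV"
    and edge_crosses: "E u w \<Longrightarrow> u \<in> VX \<longleftrightarrow> w \<in> VY"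
begin

abbreviation "d \<equiv> tdist E"

lemma edge_sym: "E u w \<Longrightarrow> E w u"
  using tree by (simp add: is_tree_def)

lemma no_cycle:
  "\<not> (3 \<le> n \<and> inj_on (cyc :: nat \<Rightarrow> 'v) {..<n} \<and> (\<forall>i<n. E (cyc i) (cyc (Suc i mod n))))"
  using tree unfolding is_tree_def by blast

lemma edge_rel_iff [simp]: "(a, b) \<in> edge_rel E \<longleftrightarrow> E a b"
  by (simp add: edge_rel_def)

lemma tdist_walk: "(u, w) \<in> edge_rel E ^^ d u w"
proof -
  have "(u, w) \<in> (edge_rel E)\<^sup>*" using tree by (simp add: is_tree_def)
  then have "\<exists>n. (u, w) \<in> edge_rel E ^^ n" by (simp add: rtrancl_power)
  then show ?thesis unfolding tdist_def by (rule LeastI_ex)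
qed

lemma tdist_le: "(u, w) \<in> edge_rel E ^^ n \<Longrightarrow> d u w \<le> n"
  unfolding tdist_def by (rule Least_le)

lemma tdist_eq_0_iff: "d x u = 0 \<longleftrightarrow> u = x"
  using tdist_walk[of x u] tdist_le[of x u 0] by auto

lemma walk_sym: "(u, w) \<in> edge_rel E ^^ n \<Longrightarrow> (w, u) \<in> edge_rel E ^^ n"
proof (induction n arbitrary: w)
  case (Suc n)
  from Suc.prems obtain y where y: "(u, y) \<in> edge_rel E ^^ n" "E y w"
    by (auto elim: relpow_Suc_E)
  have "(w, y) \<in> edge_rel E" using edge_sym y(2) by simp
  then show ?case using Suc.IH[OF y(1)] by (rule relpow_Suc_I2)
qed simp

lemma tdist_sym: "d u w = d w u"
  using tdist_le[OF walk_sym[OF tdist_walk[of u w]]] tdist_le[OF walk_sym[OF tdist_walk[of w u]]]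
  by linarith

lemma tdist_edge_le: "E w u \<Longrightarrow> d x u \<le> d x w + 1"
  using tdist_le relpow_Suc_I[OF tdist_walk[of x w]] by fastforce

lemma tdist_Suc_parent: "d x u = Suc n \<Longrightarrow> \<exists>w. E w u \<and> d x w = n"
proof -
  assume du: "d x u = Suc n"
  from tdist_walk[of x u] du obtain w where w: "(x, w) \<in> edge_rel E ^^ n" "E w u"
    by (auto elim: relpow_Suc_E)
  have "d x w \<le> n" using w tdist_le by blast
  moreover have "d x u \<le> d x w + 1" using tdist_edge_le w by blast
  ultimately show ?thesis using du w by auto
qed

lemma walk_parity: "(x, u) \<in> edge_rel E ^^ n \<Longrightarrow> (x \<in> VX \<longleftrightarrow> u \<in> VX) \<longleftrightarrow> even n"
proof (induction n arbitrary: u)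
  case (Suc n)
  from Suc.prems obtain y where y: "(x, y) \<in> edge_rel E ^^ n" "E y u"
    by (auto elim: relpow_Suc_E)
  have "y \<in> VX \<longleftrightarrow> u \<notin> VX" using edge_crosses[OF y(2)] parts_disjoint parts_cover by blast
  with Suc.IH[OF y(1)] show ?case by auto
qed simp

lemma tdist_edge: "E u w \<Longrightarrow> d x w = d x u + 1 \<or> d x u = d x w + 1"
proof -
  assume e: "E u w"
  have "u \<in> VX \<longleftrightarrow> w \<notin> VX" using edge_crosses[OF e] parts_disjoint parts_cover by blast
  then have "d x u \<noteq> d x w" using walk_parity[OF tdist_walk[of x u]] walk_parity[OF tdist_walk[of x w]]
    by auto
  moreover have "d x w \<le> d x u + 1" "d x u \<le> d x w + 1"
    using tdist_edge_le e edge_sym by blast+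
  ultimately show ?thesis by linarith
qed

lemma tdist_Aut: "g \<in> Aut E \<Longrightarrow> d (g x) (g u) = d x u"
proof -
  assume g: "g \<in> Aut E"
  have "(x, u) \<in> edge_rel E ^^ n \<longleftrightarrow> (g x, g u) \<in> edge_rel E ^^ n" for n
  proof (induction n arbitrary: u)
    case 0
    show ?case using g by (simp add: Aut_def bij_def inj_eq)
  next
    case (Suc n)
    have e: "\<And>a b. E a b \<longleftrightarrow> E (g a) (g b)" and s: "surj g" using g by (auto simp: Aut_def bij_def)
    show ?case
    proof
      assume "(x, u) \<in> edge_rel E ^^ Suc n"
      then obtain y where "(x, y) \<in> edge_rel E ^^ n" "E y u" by (auto elim: relpow_Suc_E)
      then show "(g x, g u) \<in> edge_rel E ^^ Suc n" using Suc.IH e by (auto intro: relpow_Suc_I)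
    next
      assume "(g x, g u) \<in> edge_rel E ^^ Suc n"
      then obtain y where y: "(g x, g y) \<in> edge_rel E ^^ n" "E (g y) (g u)"
        using s by (auto elim!: relpow_Suc_E) (metis surj_f_inv_f)
      then show "(x, u) \<in> edge_rel E ^^ Suc n" using Suc.IH e by (auto intro: relpow_Suc_I)
    qed
  qed
  then show ?thesis unfolding tdist_def by simp
qed

lemma equidistant_joined_by_closer_walk:
  "d x a = n \<Longrightarrow> d x b = n \<Longrightarrow> a \<noteq> b \<Longrightarrow>
   \<exists>zs. successively E ([a] @ zs @ [b]) \<and> distinct ([a] @ zs @ [b]) \<and> zs \<noteq> [] \<and>
        (\<forall>z\<in>set zs. d x z < n)"
proof (induction n arbitrary: a b)
  case 0
  then show ?case using tdist_eq_0_iff by auto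
next
  case (Suc m)
  obtain a' where a': "E a' a" "d x a' = m" using tdist_Suc_parent Suc.prems(1) by blast
  obtain b' where b': "E b' b" "d x b' = m" using tdist_Suc_parent Suc.prems(2) by blast
  show ?case
  proof (cases "a' = b'")
    case True
    then show ?thesis using a' b' Suc.prems edge_sym by (intro exI[of _ "[a']"]) auto
  next
    case False
    from Suc.IH[OF a'(2) b'(2) False] obtain zs where
      zs: "successively E ([a'] @ zs @ [b'])" "distinct ([a'] @ zs @ [b'])" "zs \<noteq> []"
        "\<forall>z\<in>set zs. d x z < m" by blast
    let ?ys = "a' # zs @ [b']"
    have walk: "successively E ([a] @ ?ys @ [b])"
      using zs(1,3) a' b' edge_sym by (auto simp: successively_append_iff successively_Cons)
    have closer: "\<forall>z\<in>set ?ys. d x z \<le> m" using zs(4) a' b' by auto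
    then have "a \<notin> set ?ys" "b \<notin> set ?ys" using Suc.prems by fastforce+
    then have "distinct ([a] @ ?ys @ [b])" using zs(2) Suc.prems(3) by auto
    with walk closer show ?thesis by (intro exI[of _ ?ys]) auto
  qed
qed

lemma closer_neighbour_unique:
  assumes ua: "E u a" and ub: "E u b" and "d x a < d x u" "d x b < d x u"
  shows "a = b"
proof (rule ccontr)
  assume "a \<noteq> b"
  have da: "d x u = d x a + 1" and db: "d x u = d x b + 1"
    using tdist_edge[OF ua, of x] tdist_edge[OF ub, of x] assms(3,4) by auto
  then obtain zs where zs: "successively E ([a] @ zs @ [b])" "distinct ([a] @ zs @ [b])"
      "zs \<noteq> []" "\<forall>z\<in>set zs. d x z < d x a"
    using equidistant_joined_by_closer_walk[of x a "d x a" b] \<open>a \<noteq> b\<close> by auto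
  define cyc where "cyc = u # ([a] @ zs @ [b])"
  define n where "n = length cyc"
  have "3 \<le> n" using zs(3) unfolding n_def cyc_def by (cases zs) auto
  moreover have "u \<notin> set ([a] @ zs @ [b])" using zs(4) da db by fastforce
  then have "distinct cyc" using zs(2) unfolding cyc_def by simp
  then have "inj_on ((!) cyc) {..<n}" unfolding inj_on_def n_def by (simp add: nth_eq_iff_index_eq)
  moreover have "E (cyc ! i) (cyc ! (Suc i mod n))" if "i < n" for i
  proof (cases "Suc i < n")
    case True
    have "successively E cyc" using zs(1) ua unfolding cyc_def by simp
    then show ?thesis using successively_nth True unfolding n_def by simp
  next
    case False
    then have "Suc i = n" using that by simp
    moreover have "cyc ! i = b" using \<open>Suc i = n\<close> unfolding n_def cyc_def
      by (metis diff_Suc_1 last_conv_nth last_snoc list.distinct(1) append_Cons append_Nil length_Cons)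
    ultimately show ?thesis using edge_sym[OF ub] unfolding cyc_def by simp
  qed
  ultimately show False using no_cycle by blast
qed

lemma closer_end_propagates:
  assumes uw: "E u w" and z: "E z1 z2" and "\<not> (z1 = u \<and> z2 = w)" "\<not> (z1 = w \<and> z2 = u)"
    and closer1: "d z1 u < d z1 w"
  shows "d z2 u < d z2 w"
proof (rule ccontr)
  assume "\<not> d z2 u < d z2 w"
  define a where "a = d z1 u"
  have h1: "d z1 w = a + 1" using tdist_edge[OF uw, of z1] closer1 unfolding a_def by auto
  define b where "b = d z2 w"
  have h2: "d z2 u = b + 1" using tdist_edge[OF uw, of z2] \<open>\<not> d z2 u < d z2 w\<close> unfolding b_def by auto
  have "a = b"
    using tdist_edge[OF z, of u] tdist_edge[OF z, of w] h1 h2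
      tdist_sym[of u z1] tdist_sym[of u z2] tdist_sym[of w z1] tdist_sym[of w z2]
    unfolding a_def b_def by linarith
  show False
  proof (cases a)
    case 0
    then have "z1 = u" "z2 = w" using \<open>a = b\<close> tdist_eq_0_iff tdist_sym unfolding a_def b_def by metis+
    then show False using assms(3) by blast
  next
    case (Suc a')
    \<comment> \<open>z1 and the neighbour y of z2 towards w are both closer to u than z2, so they coincide\<close>
    have "d w z2 = Suc a'" using \<open>a = b\<close> Suc tdist_sym unfolding b_def by metis
    then obtain y where y: "E y z2" "d w y = a'" using tdist_Suc_parent by blast
    have "d y u \<le> d y w + 1" using tdist_edge_le edge_sym[OF uw] by blast
    then have "d u y < d u z2"
      using y h2 \<open>a = b\<close> Suc tdist_sym[of y u] tdist_sym[of y w] tdist_sym[of u z2] unfolding b_def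
      by linarith
    moreover have "d u z1 < d u z2"
      using h2 \<open>a = b\<close> tdist_sym[of u z1] tdist_sym[of u z2] unfolding a_def b_def by linarith
    ultimately have "z1 = y" using closer_neighbour_unique edge_sym z y(1) by blast
    then have "d w z1 = a'" using y(2) by simp
    then show False using h1 tdist_sym[of w z1] Suc unfolding a_def by linarith
  qed
qed

lemma closer_end_edge_invariant:
  assumes "E u w" "E z1 z2" "\<not> (z1 = u \<and> z2 = w)" "\<not> (z1 = w \<and> z2 = u)"
  shows "d z1 u < d z1 w \<longleftrightarrow> d z2 u < d z2 w"
  using closer_end_propagates[OF assms] closer_end_propagates[OF assms(1) edge_sym[OF assms(2)]] assms(3,4)
  by blast

end

section \<open>Projection onto a path\<close>

locale tree_path = bipartite_tree E VX VY for E :: "'v \<Rightarrow> 'v \<Rightarrow> bool" and VX VY +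
  fixes I :: "int set" and p :: "int \<Rightarrow> 'v" and P :: "'v set"
  assumes index_nonempty: "I \<noteq> {}"
    and index_convex: "\<And>i j k. i \<in> I \<Longrightarrow> k \<in> I \<Longrightarrow> i \<le> j \<Longrightarrow> j \<le> k \<Longrightarrow> j \<in> I"
    and path_inj: "inj_on p I"
    and path_edge: "\<And>i. i \<in> I \<Longrightarrow> i + 1 \<in> I \<Longrightarrow> E (p i) (p (i + 1))"
    and path_vertices: "P = p ` I"
begin

lemma path_no_interior_max:
  assumes "k - 1 \<in> I" "k \<in> I" "k + 1 \<in> I"
  shows "\<not> (d v (p (k - 1)) < d v (p k) \<and> d v (p (k + 1)) < d v (p k))"
proof -
  have "E (p k) (p (k - 1))" using path_edge[of "k - 1"] assms edge_sym by simp
  moreover have "E (p k) (p (k + 1))" using path_edge assms by simp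
  moreover have "p (k - 1) \<noteq> p (k + 1)" using inj_onD[OF path_inj] assms by force
  ultimately show ?thesis using closer_neighbour_unique by blast
qed

lemma path_no_two_nearest_indices:
  assumes i: "i \<in> I" and j: "j \<in> I" and ij: "i < j" and eq: "d v (p i) = d v (p j)"
    and nearest: "\<forall>k\<in>I. d v (p j) \<le> d v (p k)"
  shows False
proof -
  define f where "f k = d v (p k)" for k
  define K where "K = {i..j}"
  have KI: "K \<subseteq> I" unfolding K_def using index_convex[OF i j] by auto
  have K: "finite K" "K \<noteq> {}" unfolding K_def using ij by auto
  have "Max (f ` K) \<in> f ` K" using K by (intro Max_in) auto
  then obtain k where k: "k \<in> K" "f k = Max (f ` K)" by (metis imageE)
  have le: "f l \<le> f k" if "l \<in> K" for l using k K that by simp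
  have i1: "i + 1 \<in> K" unfolding K_def using ij by auto
  have "f (i + 1) \<noteq> f i"
    using tdist_edge[OF path_edge[of i], of v] i KI i1 unfolding f_def by auto
  moreover have "f j \<le> f (i + 1)" using nearest KI i1 unfolding f_def by auto
  ultimately have "f i < f k" using eq le[OF i1] unfolding f_def by linarith
  then have "i < k" "k < j" using k eq unfolding f_def K_def by (auto simp: less_le)
  then have nbrs: "k - 1 \<in> K" "k + 1 \<in> K" unfolding K_def by auto
  have "E (p (k - 1)) (p k)" "E (p k) (p (k + 1))"
    using path_edge[of "k - 1"] path_edge[of k] nbrs k KI by auto
  then have "f (k - 1) \<noteq> f k" "f (k + 1) \<noteq> f k"
    using tdist_edge[of "p (k - 1)" "p k" v] tdist_edge[of "p k" "p (k + 1)" v] unfolding f_def by auto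
  then have "f (k - 1) < f k" "f (k + 1) < f k" using le nbrs by force+
  then show False using path_no_interior_max[of k v] nbrs k KI unfolding f_def by blast
qed

lemma nearest_path_vertex_ex: "\<exists>q\<in>P. \<forall>q'\<in>P. q' \<noteq> q \<longrightarrow> d v q < d v q'"
proof -
  obtain q where "q \<in> P" using index_nonempty path_vertices by blast
  then obtain q0 where q0: "q0 \<in> P" "\<And>q. q \<in> P \<Longrightarrow> d v q0 \<le> d v q"
    using ex_has_least_nat[of "\<lambda>q. q \<in> P" q "d v"] by blast
  have "d v q0 < d v q'" if q': "q' \<in> P" "q' \<noteq> q0" for q'
  proof (rule ccontr)
    assume "\<not> d v q0 < d v q'"
    then have eq: "d v q0 = d v q'" using q0(2)[OF q'(1)] by simp
    obtain i where i: "i \<in> I" "q0 = p i" using q0 path_vertices by auto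
    obtain j where j: "j \<in> I" "q' = p j" using q' path_vertices by auto
    have "i \<noteq> j" using i j q' by auto
    have "\<forall>k\<in>I. d v q0 \<le> d v (p k)" using q0 path_vertices by auto
    then show False
      using path_no_two_nearest_indices[OF i(1) j(1), of v] path_no_two_nearest_indices[OF j(1) i(1), of v]
        eq i j \<open>i \<noteq> j\<close> by (cases "i < j") auto
  qed
  with q0(1) show ?thesis by blast
qed

lemma proj_spec: "proj E P v \<in> P \<and> (\<forall>q'\<in>P. q' \<noteq> proj E P v \<longrightarrow> d v (proj E P v) < d v q')"
proof -
  obtain q where q: "q \<in> P" "\<forall>q'\<in>P. q' \<noteq> q \<longrightarrow> d v q < d v q'"
    using nearest_path_vertex_ex by blast
  have "\<exists>!q. q \<in> P \<and> (\<forall>q'\<in>P. q' \<noteq> q \<longrightarrow> d v q < d v q')"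
    by (rule ex1I[of _ q]) (use q in \<open>auto dest: less_asym\<close>)
  then show ?thesis unfolding proj_def by (rule theI')
qed

lemma proj_in: "proj E P v \<in> P"
  using proj_spec by blast

lemma proj_eq:
  assumes "q \<in> P" "\<forall>q'\<in>P. q' \<noteq> q \<longrightarrow> d v q < d v q'"
  shows "proj E P v = q"
  using proj_spec[of v] assms by (metis less_asym)

lemma proj_self:
  assumes "v \<in> P"
  shows "proj E P v = v"
proof (rule proj_eq[OF assms], intro ballI impI)
  fix q' assume "q' \<noteq> v"
  then have "d v q' \<noteq> 0" by (simp add: tdist_eq_0_iff)
  then show "d v v < d v q'" using tdist_eq_0_iff[of v v] by simp
qed

lemma proj_edge_off_path:
  assumes uw: "E u w" and u: "u \<notin> P"
  shows "proj E P w = proj E P u"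
proof -
  define q where "q = proj E P u"
  have q: "q \<in> P" "\<forall>q'\<in>P. q' \<noteq> q \<longrightarrow> d u q < d u q'"
    using proj_spec unfolding q_def by blast+
  have step: "d w q = d u q + 1 \<or> d u q = d w q + 1"
    using tdist_edge[OF uw, of q] tdist_sym[of q w] tdist_sym[of q u] by simp
  show ?thesis unfolding q_def[symmetric]
  proof (rule proj_eq[OF q(1)], intro ballI impI)
    fix q' assume q': "q' \<in> P" "q' \<noteq> q"
    have closer: "d u q < d u q'" using q q' by blast
    show "d w q < d w q'"
      using step
    proof
      assume "d u q = d w q + 1"
      moreover have "d q' u \<le> d q' w + 1" using tdist_edge_le edge_sym[OF uw] by blast
      ultimately show ?thesis using closer tdist_sym[of q' u] tdist_sym[of q' w] by linarith
    next
      assume far: "d w q = d u q + 1"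
      \<comment> \<open>the path avoids u, so all of its vertices lie on the same side of the edge uw as q\<close>
      have edge_step: "(d (p k) u < d (p k) w) = (d (p (k + 1)) u < d (p (k + 1)) w)"
        if "k \<in> I" "k + 1 \<in> I" for k
        using closer_end_edge_invariant[OF uw path_edge[OF that]] that u path_vertices by auto
      have side: "(d (p i) u < d (p i) w) = (d (p j) u < d (p j) w)" if "i \<in> I" "j \<in> I" for i j
        using index_convex edge_step that
        by (rule convex_int_set_const[where f = "\<lambda>k. d (p k) u < d (p k) w"])
      obtain i j where "i \<in> I" "q = p i" "j \<in> I" "q' = p j"
        using q(1) q'(1) path_vertices by auto
      then have "d q u < d q w \<longleftrightarrow> d q' u < d q' w" using side by blast
      then have "d q' u < d q' w" using far tdist_sym[of q u] tdist_sym[of q w] by linarith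
      then have "d q' w = d q' u + 1" using tdist_edge[OF uw, of q'] by auto
      then show ?thesis using far closer tdist_sym[of q' u] tdist_sym[of q' w] by linarith
    qed
  qed
qed

lemma proj_edge:
  assumes "E u w" "\<not> (u \<in> P \<and> w \<in> P)"
  shows "proj E P u = proj E P w"
  using proj_edge_off_path[OF assms(1)] proj_edge_off_path[OF edge_sym[OF assms(1)]] assms(2)
  by metis

lemma proj_Aut_fixing_path:
  assumes h: "h \<in> Aut E" and fix_P: "\<forall>q\<in>P. h q = q"
  shows "proj E P (h v) = proj E P v"
proof (rule proj_eq[OF proj_in], intro ballI impI)
  fix q' assume q': "q' \<in> P" "q' \<noteq> proj E P v"
  have "d v (proj E P v) < d v q'" using proj_spec q' by blast
  moreover have "d (h v) (proj E P v) = d v (proj E P v)"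
    using tdist_Aut[OF h, of v "proj E P v"] fix_P proj_in by simp
  moreover have "d (h v) q' = d v q'" using tdist_Aut[OF h, of v q'] fix_P q' by simp
  ultimately show "d (h v) (proj E P v) < d (h v) q'" by simp
qed

end

section \<open>Closure of U under gluing\<close>

context tree_path
begin

lemma proj_glue:
  assumes "\<And>q. q \<in> P \<Longrightarrow> H q \<in> Aut E" and "\<And>q r. q \<in> P \<Longrightarrow> r \<in> P \<Longrightarrow> H q r = r"
  shows "proj E P (glue E P H v) = proj E P v"
  unfolding glue_def using assms proj_in by (blast intro: proj_Aut_fixing_path)

lemma glue_neighbour:
  assumes fix_P: "\<And>q r. q \<in> P \<Longrightarrow> r \<in> P \<Longrightarrow> H q r = r" and "E v w"
  shows "glue E P H w = H (proj E P v) w"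
proof (cases "proj E P w = proj E P v")
  case False
  then have "v \<in> P" "w \<in> P" using proj_edge[OF \<open>E v w\<close>] by fastforce+
  then show ?thesis using fix_P proj_in unfolding glue_def by simp
qed (simp add: glue_def)

lemma bij_glue:
  assumes Aut: "\<And>q. q \<in> P \<Longrightarrow> H q \<in> Aut E" and fix_P: "\<And>q r. q \<in> P \<Longrightarrow> r \<in> P \<Longrightarrow> H q r = r"
  shows "bij (glue E P H)"
proof -
  let ?g = "glue E P H"
  have bij: "bij (H (proj E P v))" for v using Aut[OF proj_in] by (simp add: Aut_def)
  have proj_g: "proj E P (?g v) = proj E P v" for v by (rule proj_glue[OF Aut fix_P])
  have "inj ?g"
  proof (rule injI)
    fix u w assume eq: "?g u = ?g w"
    then have "proj E P u = proj E P w" using proj_g by metis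
    then show "u = w" using eq bij unfolding glue_def by (metis bij_is_inj inj_eq)
  qed
  moreover have "y \<in> range ?g" for y
  proof -
    obtain x where x: "H (proj E P y) x = y" using bij by (metis bij_is_surj surj_f_inv_f)
    have "proj E P (H (proj E P y) x) = proj E P x"
      using proj_Aut_fixing_path[OF Aut[OF proj_in]] fix_P proj_in by blast
    then have "?g x = y" using x unfolding glue_def by simp
    then show ?thesis by (metis rangeI)
  qed
  ultimately show ?thesis by (auto simp: bij_def)
qed

lemma glue_Aut:
  assumes Aut: "\<And>q. q \<in> P \<Longrightarrow> H q \<in> Aut E" and fix_P: "\<And>q r. q \<in> P \<Longrightarrow> r \<in> P \<Longrightarrow> H q r = r"
  shows "glue E P H \<in> Aut E"
proof -
  let ?g = "glue E P H"
  have bij: "bij (H (proj E P v))" and edges: "E a b \<longleftrightarrow> E (H (proj E P v) a) (H (proj E P v) b)"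
    for v a b using Aut[OF proj_in] by (auto simp: Aut_def)
  have proj_g: "proj E P (?g v) = proj E P v" for v by (rule proj_glue[OF Aut fix_P])
  have "E u w \<longleftrightarrow> E (?g u) (?g w)" for u w
  proof
    assume e: "E u w"
    have "?g u = H (proj E P u) u" "?g w = H (proj E P u) w"
      using glue_neighbour[OF fix_P e] by (simp_all add: glue_def)
    then show "E (?g u) (?g w)" using edges e by simp
  next
    assume e: "E (?g u) (?g w)"
    show "E u w"
    proof (cases "proj E P u = proj E P w")
      case True
      then show ?thesis using e edges unfolding glue_def by metis
    next
      case False
      then have "?g u \<in> P" "?g w \<in> P" using proj_edge[OF e] proj_g by metis+
      \<comment> \<open>an edge joining different fibres lies on the path, which every H q fixes\<close>
      then have "?g u = u" "?g w = w"
        using fix_P proj_in bij unfolding glue_def by (metis bij_is_inj inj_eq)+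
      then show ?thesis using e by simp
    qed
  qed
  then show ?thesis using bij_glue[where H = H, OF Aut fix_P] unfolding Aut_def by blast
qed

lemma glue_in_U:
  assumes lc: "legal_colouring E VX VY X Y c"
    and H: "\<And>q. q \<in> P \<Longrightarrow> H q \<in> pw_stab (U E VX VY X Y c M N) P"
  shows "glue E P H \<in> U E VX VY X Y c M N"
proof -
  let ?g = "glue E P H"
  have Aut: "H q \<in> Aut E" and fix_P: "r \<in> P \<Longrightarrow> H q r = r"
    and parts: "H q ` VX = VX" and M: "v \<in> VX \<Longrightarrow> local_action E c (H q) v X \<in> M"
    and N: "v \<in> VY \<Longrightarrow> local_action E c (H q) v Y \<in> N" if "q \<in> P" for q r v
    using H[OF that] unfolding pw_stab_def U_def by auto
  have g_Aut: "?g \<in> Aut E" by (rule glue_Aut[OF Aut fix_P])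
  have "H q v \<in> VX \<longleftrightarrow> v \<in> VX" if "q \<in> P" for q v
    using parts[OF that] bij_image_eq_iff[of "H q" VX] Aut[OF that] by (simp add: Aut_def)
  then have "?g ` VX = VX"
    using bij_image_eq_iff[of ?g VX] g_Aut proj_in by (simp add: Aut_def glue_def)
  moreover have "local_action E c ?g v S = local_action E c (H (proj E P v)) v S"
    if "bij_betw c (arcs_from E v) S" for v S
  proof (rule local_action_cong[OF that])
    show "?g w = H (proj E P v) w" if "E v w" for w using glue_neighbour[OF fix_P that] .
  qed (simp add: glue_def)
  ultimately show ?thesis
    using g_Aut M N proj_in lc unfolding U_def legal_colouring_def by auto
qed

end

theorem theorem4p2:
  fixes E :: "'v \<Rightarrow> 'v \<Rightarrow> bool"
    and VX VY :: "'v set"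
    and X Y :: "'c set"
    and M N :: "('c \<Rightarrow> 'c) set"
    and c :: "'v \<times> 'v \<Rightarrow> 'c"
  assumes "X \<inter> Y = {}"
    and "\<exists>a\<in>X. \<exists>b\<in>X. a \<noteq> b"
    and "\<exists>a\<in>Y. \<exists>b\<in>Y. a \<noteq> b"
    and "subgroup M (BijGroup X)"
    and "subgroup N (BijGroup Y)"
    and "is_tree E"
    and "biregular_bipartition E VX VY X Y"
    and "legal_colouring E VX VY X Y c"
  shows "property_P E (U E VX VY X Y c M N)"
  unfolding property_P_def
proof (intro allI impI)
  interpret bipartite_tree E VX VY
    using assms(6,7) by unfold_locales (auto simp: biregular_bipartition_def)
  fix P assume "is_path_vertices E P"
  then obtain I and p :: "int \<Rightarrow> 'v" where "tree_path E VX VY I p P"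
    using bipartite_tree_axioms
    unfolding is_path_vertices_def tree_path_def tree_path_axioms_def by blast
  then interpret tree_path E VX VY I p P .
  show "bij_betw (natural_map E P) (pw_stab (U E VX VY X Y c M N) P)
      (PiE P (induced_on_fibre E (U E VX VY X Y c M N) P))"
    by (rule natural_map_bij_betw_if_glue_closed[OF proj_in proj_self glue_in_U[OF assms(8)]])
qed

end
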